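(* Let $\langle X,\leq\rangle$ be a countable dense linear order without endpoints, let $\Gamma$ be its automorphism group acting by application, and let $I$ be the ideal of subsets of $X$ that are well-ordered by $\leq$. Then $\Gamma\curvearrowright X, I$ is $\sigma$-complete.
   Context: For a group $\Gamma$ acting on $X$, an invariant ideal $I$ on $X$ and $a\subseteq X$, $\mathrm{pstab}(a)=\{\gamma\in\Gamma:\gamma\cdot x=x\ \forall x\in a\}$ and $\gamma\cdot b=\{\gamma\cdot x:x\in b\}$. The dynamical ideal is $\sigma$-complete if for every $a\in I$ and every sequence $\langle b_n:n\in\omega\rangle$ of sets in $I$ there are $\gamma_n\in\mathrm{pstab}(a)$ with $\bigcup_n\gamma_n\cdot b_n\in I$. *)

theory Defs
  imports "HOL-Library.Countable_Set"
begin

definition pstab :: "'g set \<Rightarrow> ('g \<Rightarrow> 'x \<Rightarrow> 'x) \<Rightarrow> 'x set \<Rightarrow> 'g set" where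
  "pstab G act a = {g \<in> G. \<forall>x\<in>a. act g x = x}"

definition sigma_complete :: "'g set \<Rightarrow> ('g \<Rightarrow> 'x \<Rightarrow> 'x) \<Rightarrow> 'x set set \<Rightarrow> bool" where
  "sigma_complete G act I \<longleftrightarrow>
     (\<forall>a\<in>I. \<forall>b :: nat \<Rightarrow> 'x set. (\<forall>n. b n \<in> I) \<longrightarrow>
        (\<exists>\<gamma> :: nat \<Rightarrow> 'g. (\<forall>n. \<gamma> n \<in> pstab G act a) \<and> (\<Union>n. act (\<gamma> n) ` b n) \<in> I))"

definition order_automorphisms :: "('a::linorder \<Rightarrow> 'a) set" where
  "order_automorphisms = {f. bij f \<and> (\<forall>x y. x \<le> y \<longleftrightarrow> f x \<le> f y)}"

definition well_ordered_set :: "'a::linorder set \<Rightarrow> bool" where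
  "well_ordered_set A \<longleftrightarrow> (\<forall>B \<subseteq> A. B \<noteq> {} \<longrightarrow> (\<exists>m\<in>B. \<forall>y\<in>B. m \<le> y))"

end

theory Submission
  imports Defs
begin

text \<open>
  Let \<open>F\<close> be the well-ordered set obtained from \<open>a\<close> by adding the suprema of its initial segments.
  Every gap of \<open>F\<close> (a class of points realising the same cut of \<open>F\<close>) is a convex countable dense
  order without endpoints, hence homogeneous by Cantor's back-and-forth argument, and automorphisms
  supported in gaps fix \<open>a\<close> pointwise. Enumerate \<open>X\<close> as \<open>x\<^sub>0, x\<^sub>1, \<dots>\<close> and choose
  \<open>\<gamma>\<^sub>n\<close> so that, within each gap, \<open>\<gamma>\<^sub>n b\<^sub>n\<close> lies above all \<open>x\<^sub>k\<close> with \<open>k < n\<close> in that gap.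
  Then a point \<open>x\<^sub>K\<close> lies above points of the same gap from only the first \<open>K + 1\<close> sets
  \<open>\<gamma>\<^sub>n b\<^sub>n\<close>. Hence a nonempty subset \<open>D\<close> of the union has a least element: either some
  \<open>x\<^sub>K \<in> D\<close> has no point of \<open>F\<close> between it and any smaller element of \<open>D\<close>, and these smaller
  elements lie in a finite union of well-ordered sets, or the least point of \<open>F\<close> lying above
  some element of \<open>D\<close> bounds a least element of \<open>D\<close>.
\<close>

section \<open>Cantor's back-and-forth argument\<close>

definition order_preserving_rel :: "('a::linorder \<times> 'b::linorder) set \<Rightarrow> bool" where
  "order_preserving_rel p \<longleftrightarrow> (\<forall>x y x' y'. (x, y) \<in> p \<longrightarrow> (x', y') \<in> p \<longrightarrow> x < x' \<longleftrightarrow> y < y')"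

lemma order_preserving_rel_converse [simp]:
  "order_preserving_rel (p\<inverse>) \<longleftrightarrow> order_preserving_rel p"
  unfolding order_preserving_rel_def by auto

lemma order_preserving_rel_UN_mono:
  fixes S :: "nat \<Rightarrow> ('a::linorder \<times> 'b::linorder) set"
  assumes "mono S" and "\<And>n. order_preserving_rel (S n)"
  shows "order_preserving_rel (\<Union>n. S n)"
  unfolding order_preserving_rel_def
proof (clarsimp)
  fix x y x' y' m n assume "(x, y) \<in> S m" "(x', y') \<in> S n"
  then have "(x, y) \<in> S (max m n)" "(x', y') \<in> S (max m n)"
    using \<open>mono S\<close> by (auto dest: monoD[of S m "max m n"] monoD[of S n "max m n"])
  with assms(2) show "x < x' \<longleftrightarrow> y < y'"
    unfolding order_preserving_rel_def by blast
qed

definition dense_without_endpoints :: "'a::linorder set \<Rightarrow> bool" where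
  "dense_without_endpoints A \<longleftrightarrow> A \<noteq> {}
     \<and> (\<forall>x\<in>A. \<forall>y\<in>A. x < y \<longrightarrow> (\<exists>z\<in>A. x < z \<and> z < y))
     \<and> (\<forall>x\<in>A. \<exists>y\<in>A. x < y) \<and> (\<forall>x\<in>A. \<exists>y\<in>A. y < x)"

lemma dense_without_endpoints_separate:
  assumes B: "dense_without_endpoints B"
    and "finite L" "finite U" "L \<subseteq> B" "U \<subseteq> B" and LU: "\<forall>l\<in>L. \<forall>u\<in>U. l < u"
  shows "\<exists>b\<in>B. (\<forall>l\<in>L. l < b) \<and> (\<forall>u\<in>U. b < u)"
proof -
  obtain l where l: "l \<in> B" "\<forall>x\<in>L. x \<le> l" "\<forall>y\<in>U. l < y"
  proof (cases "L = {}")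
    case True
    obtain l where "l \<in> B" "U \<noteq> {} \<Longrightarrow> l < Min U"
      using B \<open>finite U\<close> \<open>U \<subseteq> B\<close> Min_in unfolding dense_without_endpoints_def by blast
    moreover have "\<forall>y\<in>U. l < y"
      using calculation \<open>finite U\<close> by (metis Min_le empty_iff order_less_le_trans)
    ultimately show ?thesis using that True by blast
  next
    case False
    then show ?thesis using that LU \<open>finite L\<close> \<open>L \<subseteq> B\<close> by (meson Max_ge Max_in subsetD)
  qed
  obtain u where u: "u \<in> B" "l < u" "\<forall>y\<in>U. u \<le> y"
  proof (cases "U = {}")
    case True
    then show ?thesis using that B \<open>l \<in> B\<close> unfolding dense_without_endpoints_def by blast
  next
    case False
    then show ?thesis using that l \<open>finite U\<close> \<open>U \<subseteq> B\<close> by (meson Min_le Min_in subsetD)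
  qed
  obtain b where "b \<in> B" "l < b" "b < u"
    using B l u unfolding dense_without_endpoints_def by blast
  then show ?thesis using l u by (meson order_le_less_trans order_less_le_trans)
qed

lemma order_preserving_rel_extend_domain:
  assumes B: "dense_without_endpoints B" and "finite p" and p: "p \<subseteq> A \<times> B"
    and op: "order_preserving_rel p"
  shows "\<exists>b\<in>B. order_preserving_rel (insert (a, b) p)"
proof (cases "a \<in> Domain p")
  case True
  then obtain b where "(a, b) \<in> p" by blast
  then have "b \<in> B" "insert (a, b) p = p" using p by auto
  then show ?thesis using op by metis
next
  case False
  define L where "L = {y. \<exists>x. (x, y) \<in> p \<and> x < a}"
  define U where "U = {y. \<exists>x. (x, y) \<in> p \<and> a < x}"
  have "L \<subseteq> Range p" "U \<subseteq> Range p" unfolding L_def U_def by blast+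
  then have "finite L" "finite U" using \<open>finite p\<close> finite_Range finite_subset by blast+
  moreover have "L \<subseteq> B" "U \<subseteq> B" using p unfolding L_def U_def by blast+
  moreover have "\<forall>l\<in>L. \<forall>u\<in>U. l < u"
    using op unfolding L_def U_def order_preserving_rel_def by (blast dest: less_trans)
  ultimately obtain b where b: "b \<in> B" "\<forall>l\<in>L. l < b" "\<forall>u\<in>U. b < u"
    using dense_without_endpoints_separate[OF B, of L U] by blast
  have "x \<noteq> a" if "(x, y) \<in> p" for x y
    using that False by blast
  moreover have "x < a \<Longrightarrow> y < b" "a < x \<Longrightarrow> b < y" if "(x, y) \<in> p" for x y
    using that b unfolding L_def U_def by blast+
  ultimately have "x < a \<longleftrightarrow> y < b" "a < x \<longleftrightarrow> b < y" if "(x, y) \<in> p" for x y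
    using that by (meson less_asym neqE)+
  with op have "order_preserving_rel (insert (a, b) p)"
    unfolding order_preserving_rel_def by (intro allI impI) (elim insertE; simp; blast)
  with \<open>b \<in> B\<close> show ?thesis by blast
qed

lemma order_preserving_rel_extend_range:
  assumes A: "dense_without_endpoints A" and "finite p" and "p \<subseteq> A \<times> B"
    and "order_preserving_rel p"
  shows "\<exists>a\<in>A. order_preserving_rel (insert (a, b) p)"
proof -
  have "p\<inverse> \<subseteq> B \<times> A" using \<open>p \<subseteq> A \<times> B\<close> by auto
  moreover have "finite (p\<inverse>)" "order_preserving_rel (p\<inverse>)" using assms by auto
  ultimately obtain a where "a \<in> A" "order_preserving_rel (insert (b, a) (p\<inverse>))"
    using order_preserving_rel_extend_domain[OF A] by blast
  moreover have "insert (b, a) (p\<inverse>) = (insert (a, b) p)\<inverse>" by auto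
  ultimately show ?thesis by auto
qed

lemma order_preserving_rel_extend:
  assumes A: "dense_without_endpoints A" and B: "dense_without_endpoints B"
    and "finite p" "p \<subseteq> A \<times> B" "order_preserving_rel p" and "a \<in> A" "b \<in> B"
  shows "\<exists>q. finite q \<and> q \<subseteq> A \<times> B \<and> order_preserving_rel q \<and> p \<subseteq> q
           \<and> a \<in> Domain q \<and> b \<in> Range q"
proof -
  obtain b' where "b' \<in> B" "order_preserving_rel (insert (a, b') p)"
    using order_preserving_rel_extend_domain[OF B] assms by blast
  moreover have "finite (insert (a, b') p)" "insert (a, b') p \<subseteq> A \<times> B"
    using assms \<open>b' \<in> B\<close> by auto
  ultimately obtain a' where "a' \<in> A" "order_preserving_rel (insert (a', b) (insert (a, b') p))"
    using order_preserving_rel_extend_range[OF A] by blast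
  with assms \<open>b' \<in> B\<close> show ?thesis
    by (intro exI[of _ "insert (a', b) (insert (a, b') p)"]) auto
qed

lemma back_and_forth_rel:
  assumes "countable A" "countable B"
    and A: "dense_without_endpoints A" and B: "dense_without_endpoints B"
    and "finite p" "p \<subseteq> A \<times> B" "order_preserving_rel p"
  shows "\<exists>R. R \<subseteq> A \<times> B \<and> order_preserving_rel R \<and> p \<subseteq> R \<and> Domain R = A \<and> Range R = B"
proof -
  define P where "P q \<longleftrightarrow> finite q \<and> q \<subseteq> A \<times> B \<and> order_preserving_rel q" for q
  define ea where "ea = from_nat_into A"
  define eb where "eb = from_nat_into B"
  have "A \<noteq> {}" "B \<noteq> {}" using A B unfolding dense_without_endpoints_def by auto
  then have ea: "range ea = A" and eb: "range eb = B"
    using assms unfolding ea_def eb_def by simp_all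
  have "ea n \<in> A" "eb n \<in> B" for n using ea eb by blast+
  then have extend: "\<exists>q'. P q' \<and> q \<subseteq> q' \<and> ea n \<in> Domain q' \<and> eb n \<in> Range q'"
    if "P q" for q n
    using order_preserving_rel_extend[OF A B, of q "ea n" "eb n"] that unfolding P_def by blast
  define ext where
    "ext q n = (SOME q'. P q' \<and> q \<subseteq> q' \<and> ea n \<in> Domain q' \<and> eb n \<in> Range q')" for q n
  have ext: "P (ext q n) \<and> q \<subseteq> ext q n \<and> ea n \<in> Domain (ext q n) \<and> eb n \<in> Range (ext q n)"
    if "P q" for q n
    unfolding ext_def by (rule someI_ex) (rule extend[OF that])
  define S where "S = rec_nat p (\<lambda>n q. ext q n)"
  have S_0: "S 0 = p" and S_Suc: "S (Suc n) = ext (S n) n" for n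
    by (simp_all add: S_def)
  have P_S: "P (S n)" for n
    by (induction n) (use assms ext in \<open>auto simp: S_0 S_Suc P_def\<close>)
  have "mono S"
    unfolding mono_iff_le_Suc using ext P_S by (simp add: S_Suc)
  define R where "R = (\<Union>n. S n)"
  have "R \<subseteq> A \<times> B" "p \<subseteq> R" using P_S S_0 unfolding P_def R_def by blast+
  moreover have "order_preserving_rel R"
    unfolding R_def using order_preserving_rel_UN_mono[OF \<open>mono S\<close>] P_S P_def by blast
  moreover have "A \<subseteq> Domain R" "B \<subseteq> Range R"
  proof -
    have "Domain (S (Suc n)) \<subseteq> Domain R" "Range (S (Suc n)) \<subseteq> Range R" for n
      unfolding R_def by blast+
    then have "ea n \<in> Domain R" "eb n \<in> Range R" for n
      using ext[OF P_S, of n n] unfolding S_Suc[symmetric] by blast+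
    then show "A \<subseteq> Domain R" "B \<subseteq> Range R" using ea eb by blast+
  qed
  ultimately show ?thesis by blast
qed

lemma order_preserving_rel_functional:
  "order_preserving_rel R \<Longrightarrow> (x, y) \<in> R \<Longrightarrow> (x, y') \<in> R \<Longrightarrow> y = y'"
  unfolding order_preserving_rel_def by (metis less_irrefl neqE)

theorem back_and_forth:
  assumes "countable A" "countable B"
    and "dense_without_endpoints A" "dense_without_endpoints B"
    and "finite p" "p \<subseteq> A \<times> B" "order_preserving_rel p"
  shows "\<exists>f. f ` A = B \<and> strict_mono_on A f \<and> (\<forall>(x, y)\<in>p. f x = y)"
proof -
  obtain R where R: "order_preserving_rel R" "p \<subseteq> R" "Domain R = A" "Range R = B"
    using back_and_forth_rel[OF assms] by blast
  define f where "f x = (SOME y. (x, y) \<in> R)" for x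
  have f_in: "(x, f x) \<in> R" if "x \<in> A" for x
    unfolding f_def by (rule someI_ex) (use that R(3) in blast)
  have graph: "(x, y) \<in> R \<longleftrightarrow> x \<in> A \<and> f x = y" for x y
    using f_in R(3) order_preserving_rel_functional[OF R(1)] by blast
  have "f ` A = B" using R(4) graph by auto
  moreover have "strict_mono_on A f"
    using R(1) f_in unfolding order_preserving_rel_def by (blast intro: strict_mono_onI)
  moreover have "\<forall>(x, y)\<in>p. f x = y" using R(2) graph by blast
  ultimately show ?thesis by blast
qed

section \<open>Order automorphisms and homogeneity of convex pieces\<close>

lemma order_automorphismsI:
  assumes "\<And>x y. x < y \<Longrightarrow> s x < s y" and "surj s"
  shows "s \<in> order_automorphisms"
proof -
  have "x \<le> y \<longleftrightarrow> s x \<le> s y" for x y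
    by (metis assms(1) le_less not_le)
  moreover have "inj s" by (metis assms(1) injI linorder_neqE less_irrefl)
  ultimately show ?thesis using \<open>surj s\<close> unfolding order_automorphisms_def bij_def by auto
qed

lemma order_automorphisms_le_iff: "f \<in> order_automorphisms \<Longrightarrow> f x \<le> f y \<longleftrightarrow> x \<le> y"
  unfolding order_automorphisms_def by auto

lemma order_automorphisms_less_iff: "f \<in> order_automorphisms \<Longrightarrow> f x < f y \<longleftrightarrow> x < y"
  by (simp add: order_automorphisms_le_iff less_le_not_le)

lemma order_automorphisms_comp:
  "f \<in> order_automorphisms \<Longrightarrow> g \<in> order_automorphisms \<Longrightarrow> f \<circ> g \<in> order_automorphisms"
  unfolding order_automorphisms_def by (auto intro: bij_comp)

lemma id_in_order_automorphisms: "id \<in> order_automorphisms"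
  unfolding order_automorphisms_def by simp

definition order_convex :: "'a::linorder set \<Rightarrow> bool" where
  "order_convex J \<longleftrightarrow> (\<forall>x\<in>J. \<forall>y\<in>J. \<forall>z. x \<le> z \<longrightarrow> z \<le> y \<longrightarrow> z \<in> J)"

lemma order_convex_above:
  "order_convex J \<Longrightarrow> x \<in> J \<Longrightarrow> y \<notin> J \<Longrightarrow> x < y \<Longrightarrow> j \<in> J \<Longrightarrow> j < y"
  unfolding order_convex_def by (meson less_imp_le not_le)

lemma order_convex_below:
  "order_convex J \<Longrightarrow> x \<in> J \<Longrightarrow> y \<notin> J \<Longrightarrow> y < x \<Longrightarrow> j \<in> J \<Longrightarrow> y < j"
  unfolding order_convex_def by (meson less_imp_le not_le)

lemma order_convex_dense_without_endpoints:
  fixes J :: "'a::linorder set"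
  assumes dense: "\<And>x y::'a. x < y \<Longrightarrow> \<exists>z. x < z \<and> z < y"
    and "order_convex J" "J \<noteq> {}"
    and "\<And>x. x \<in> J \<Longrightarrow> \<exists>y\<in>J. x < y" "\<And>x. x \<in> J \<Longrightarrow> \<exists>y\<in>J. y < x"
  shows "dense_without_endpoints J"
  unfolding dense_without_endpoints_def
proof (intro conjI ballI impI)
  fix x y assume "x \<in> J" "y \<in> J" "x < y"
  moreover obtain z where "x < z" "z < y" using dense \<open>x < y\<close> by blast
  ultimately show "\<exists>z\<in>J. x < z \<and> z < y"
    using \<open>order_convex J\<close> unfolding order_convex_def by (meson less_imp_le)
qed (use assms(3-5) in auto)

lemma order_automorphism_patch:
  assumes J: "order_convex J" and "h ` J = J" and mono: "strict_mono_on J h"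
  shows "(\<lambda>x. if x \<in> J then h x else x) \<in> order_automorphisms" (is "?s \<in> _")
proof (rule order_automorphismsI)
  fix x y :: 'a assume "x < y"
  show "?s x < ?s y"
  proof (cases "x \<in> J"; cases "y \<in> J")
    assume "x \<in> J" "y \<in> J"
    then show ?thesis using mono \<open>x < y\<close> by (simp add: strict_mono_onD)
  next
    assume "x \<in> J" "y \<notin> J"
    moreover have "h x \<in> J" using \<open>x \<in> J\<close> \<open>h ` J = J\<close> by blast
    ultimately show ?thesis using order_convex_above[OF J \<open>x \<in> J\<close> \<open>y \<notin> J\<close> \<open>x < y\<close>] by simp
  next
    assume "x \<notin> J" "y \<in> J"
    moreover have "h y \<in> J" using \<open>y \<in> J\<close> \<open>h ` J = J\<close> by blast
    ultimately show ?thesis using order_convex_below[OF J \<open>y \<in> J\<close> \<open>x \<notin> J\<close> \<open>x < y\<close>] by simp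
  next
    assume "x \<notin> J" "y \<notin> J"
    then show ?thesis using \<open>x < y\<close> by simp
  qed
next
  have "y \<in> range ?s" for y
  proof (cases "y \<in> J")
    case True
    then have "y \<in> h ` J" using \<open>h ` J = J\<close> by simp
    then obtain x where "x \<in> J" "y = h x" by (rule imageE)
    then show ?thesis by (intro range_eqI[of _ _ x]) simp
  next
    case False
    then show ?thesis by (intro range_eqI[of _ _ y]) simp
  qed
  then show "surj ?s" by blast
qed

lemma order_convex_homogeneous:
  fixes J :: "'a::linorder set"
  assumes "countable J" "order_convex J" "dense_without_endpoints J" "p \<in> J" "q \<in> J"
  shows "\<exists>\<sigma>\<in>order_automorphisms. \<sigma> p = q \<and> (\<forall>x. x \<notin> J \<longrightarrow> \<sigma> x = x)"
proof -
  have "order_preserving_rel {(p, q)}" unfolding order_preserving_rel_def by simp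
  then obtain h where h: "h ` J = J" "strict_mono_on J h" "h p = q"
    using back_and_forth[of J J "{(p, q)}"] assms by auto
  show ?thesis
    using order_automorphism_patch[OF \<open>order_convex J\<close> h(1,2)] h(3) \<open>p \<in> J\<close>
    by (intro bexI[of _ "\<lambda>x. if x \<in> J then h x else x"]) auto
qed

lemma well_ordered_setD: "well_ordered_set A \<Longrightarrow> B \<subseteq> A \<Longrightarrow> B \<noteq> {} \<Longrightarrow> \<exists>m\<in>B. \<forall>y\<in>B. m \<le> y"
  unfolding well_ordered_set_def by blast

lemma well_ordered_set_subset: "well_ordered_set A \<Longrightarrow> B \<subseteq> A \<Longrightarrow> well_ordered_set B"
  unfolding well_ordered_set_def by blast

lemma well_ordered_set_Un:
  assumes A: "well_ordered_set A" and B: "well_ordered_set B"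
  shows "well_ordered_set (A \<union> B)"
  unfolding well_ordered_set_def
proof (intro allI impI)
  fix C assume C: "C \<subseteq> A \<union> B" "C \<noteq> {}"
  show "\<exists>m\<in>C. \<forall>y\<in>C. m \<le> y"
  proof (cases "C \<inter> A = {} \<or> C \<inter> B = {}")
    case True
    then have "C \<subseteq> A \<or> C \<subseteq> B" using C by blast
    then show ?thesis using well_ordered_setD[OF A] well_ordered_setD[OF B] C by blast
  next
    case False
    then obtain mA mB where m: "mA \<in> C \<inter> A" "\<forall>y\<in>C \<inter> A. mA \<le> y" "mB \<in> C \<inter> B" "\<forall>y\<in>C \<inter> B. mB \<le> y"
      using well_ordered_setD[OF A, of "C \<inter> A"] well_ordered_setD[OF B, of "C \<inter> B"] by blast
    then have "min mA mB \<in> C" by (simp add: min_def)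
    moreover have "\<forall>y\<in>C. min mA mB \<le> y" using C(1) m by (fastforce simp: min_le_iff_disj)
    ultimately show ?thesis by blast
  qed
qed

lemma well_ordered_set_UN:
  "finite I \<Longrightarrow> (\<And>i. i \<in> I \<Longrightarrow> well_ordered_set (S i)) \<Longrightarrow> well_ordered_set (\<Union>i\<in>I. S i)"
proof (induction I rule: finite_induct)
  case empty
  then show ?case unfolding well_ordered_set_def by simp
next
  case (insert i I)
  then show ?case by (simp add: well_ordered_set_Un)
qed

lemma well_ordered_set_image_mono:
  assumes "well_ordered_set A" and "mono f"
  shows "well_ordered_set (f ` A)"
  unfolding well_ordered_set_def
proof (intro allI impI)
  fix C assume C: "C \<subseteq> f ` A" "C \<noteq> {}"
  then obtain m where m: "m \<in> A" "f m \<in> C" "\<forall>x\<in>A. f x \<in> C \<longrightarrow> m \<le> x"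
    using well_ordered_setD[OF assms(1), of "{x\<in>A. f x \<in> C}"] by blast
  then have "\<forall>y\<in>C. f m \<le> y" using C \<open>mono f\<close> by (auto dest: monoD)
  with m show "\<exists>m\<in>C. \<forall>y\<in>C. m \<le> y" by blast
qed

lemma mono_order_automorphism: "f \<in> order_automorphisms \<Longrightarrow> mono f"
  by (simp add: monoI order_automorphisms_le_iff)

section \<open>The gaps of a well-ordered set\<close>

text \<open>Adding the suprema of initial segments makes the complement of \<open>a\<close> open to the left
  (\<open>left_closed\<close>), so that no gap has a least element.\<close>

definition limit_closure :: "'a::linorder set \<Rightarrow> 'a set" where
  "limit_closure a = {z. z \<in> a \<or> (\<forall>z'<z. \<exists>w\<in>a. z' < w \<and> w < z)}"

definition left_closed :: "'a::linorder set \<Rightarrow> bool" where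
  "left_closed F \<longleftrightarrow> (\<forall>y. y \<notin> F \<longrightarrow> (\<exists>z<y. \<forall>w\<in>F. \<not> (z < w \<and> w < y)))"

lemma subset_limit_closure: "a \<subseteq> limit_closure a"
  unfolding limit_closure_def by blast

lemma left_closed_limit_closure: "left_closed (limit_closure a)"
  unfolding left_closed_def
proof (intro allI impI)
  fix y assume "y \<notin> limit_closure a"
  then obtain z where "z < y" and gap: "\<forall>w\<in>a. \<not> (z < w \<and> w < y)"
    unfolding limit_closure_def by auto
  have "\<not> (z < w \<and> w < y)" if "w \<in> limit_closure a" for w
  proof
    assume "z < w \<and> w < y"
    moreover from that have "w \<in> a \<or> (\<exists>v\<in>a. z < v \<and> v < w)"
      using \<open>z < w \<and> w < y\<close> unfolding limit_closure_def by blast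
    ultimately show False using gap by (meson less_trans)
  qed
  with \<open>z < y\<close> show "\<exists>z<y. \<forall>w\<in>limit_closure a. \<not> (z < w \<and> w < y)" by blast
qed

lemma limit_closure_least:
  assumes B: "B \<subseteq> limit_closure a" "b \<in> B"
    and below: "\<And>w b'. w \<in> a \<Longrightarrow> b' \<in> B \<Longrightarrow> b' \<le> w \<Longrightarrow> b < w"
  shows "\<forall>b'\<in>B. b \<le> b'"
proof (intro ballI leI notI)
  fix b' assume "b' \<in> B" "b' < b"
  have "b \<notin> a" using below[OF _ \<open>b \<in> B\<close>] by blast
  then obtain w where "w \<in> a" "b' < w" "w < b"
    using B \<open>b' < b\<close> unfolding limit_closure_def by blast
  with below[OF \<open>w \<in> a\<close> \<open>b' \<in> B\<close>] show False by (simp add: less_imp_le)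
qed

lemma well_ordered_limit_closure:
  assumes a: "well_ordered_set a"
  shows "well_ordered_set (limit_closure a)"
  unfolding well_ordered_set_def
proof (intro allI impI)
  fix B assume B: "B \<subseteq> limit_closure a" "B \<noteq> {}"
  define C where "C = {w\<in>a. \<exists>b\<in>B. b \<le> w}"
  show "\<exists>m\<in>B. \<forall>y\<in>B. m \<le> y"
  proof (cases "C = {}")
    case True
    obtain b where "b \<in> B" using B by blast
    with True show ?thesis using limit_closure_least[OF B(1)] unfolding C_def by blast
  next
    case False
    obtain c where c: "c \<in> C" "\<forall>y\<in>C. c \<le> y"
      using well_ordered_setD[OF a, of C] False unfolding C_def by blast
    show ?thesis
    proof (cases "\<exists>b\<in>B. b < c")
      case True
      then obtain b where "b \<in> B" "b < c" by blast
      moreover have "b < w" if "w \<in> a" "b' \<in> B" "b' \<le> w" for w b'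
        using c(2) that \<open>b < c\<close> unfolding C_def by (blast intro: order_less_le_trans)
      ultimately show ?thesis using limit_closure_least[OF B(1)] by blast
    next
      case False
      obtain b where "b \<in> B" "b \<le> c" using c unfolding C_def by blast
      moreover have "\<forall>y\<in>B. b \<le> y" using False \<open>b \<le> c\<close> by (meson not_less order_trans)
      ultimately show ?thesis by blast
    qed
  qed
qed

text \<open>For \<open>y \<notin> F\<close> this is the gap of \<open>F\<close> containing \<open>y\<close>; for \<open>y \<in> F\<close> it is \<open>{y}\<close>.\<close>

definition cut_class :: "'a::linorder set \<Rightarrow> 'a \<Rightarrow> 'a set" where
  "cut_class F y = {u. \<forall>w\<in>F. (w < u \<longleftrightarrow> w < y) \<and> (u < w \<longleftrightarrow> y < w)}"

lemma cut_class_self: "y \<in> cut_class F y"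
  unfolding cut_class_def by blast

lemma cut_class_sym: "u \<in> cut_class F y \<longleftrightarrow> y \<in> cut_class F u"
  unfolding cut_class_def by blast

lemma cut_class_eq: "u \<in> cut_class F y \<Longrightarrow> cut_class F u = cut_class F y"
  unfolding cut_class_def by auto

lemma cut_class_disjoint:
  assumes "y \<notin> F"
  shows "cut_class F y \<inter> F = {}"
proof -
  have "u = y" if "u \<in> cut_class F y" "u \<in> F" for u
  proof -
    from that have "\<not> u < y" "\<not> y < u" unfolding cut_class_def by auto
    then show "u = y" by simp
  qed
  with assms show ?thesis by blast
qed

lemma cut_class_memI:
  assumes "x \<le> y" and "\<And>w. w \<in> F \<Longrightarrow> \<not> (x \<le> w \<and> w \<le> y)"
  shows "y \<in> cut_class F x"
  unfolding cut_class_def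
proof (intro CollectI ballI conjI)
  fix w assume "w \<in> F"
  then have "\<not> (x \<le> w \<and> w \<le> y)" by (rule assms(2))
  with \<open>x \<le> y\<close> show "w < y \<longleftrightarrow> w < x" "y < w \<longleftrightarrow> x < w" by auto
qed

lemma order_convex_cut_class: "order_convex (cut_class F y)"
  unfolding order_convex_def
proof (intro ballI allI impI)
  fix u v t assume u: "u \<in> cut_class F y" and v: "v \<in> cut_class F y" and "u \<le> t" "t \<le> v"
  show "t \<in> cut_class F y"
    unfolding cut_class_def
  proof (intro CollectI ballI conjI)
    fix w assume "w \<in> F"
    then have "w < u \<longleftrightarrow> w < y" "w < v \<longleftrightarrow> w < y" "u < w \<longleftrightarrow> y < w" "v < w \<longleftrightarrow> y < w"
      using u v unfolding cut_class_def by blast+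
    with \<open>u \<le> t\<close> \<open>t \<le> v\<close> show "w < t \<longleftrightarrow> w < y" "t < w \<longleftrightarrow> y < w"
      by (meson order_less_le_trans order_le_less_trans)+
  qed
qed

lemma cut_class_automorphism:
  assumes g: "g \<in> order_automorphisms" and "\<forall>w\<in>F. g w = w"
  shows "cut_class F (g z) = cut_class F z"
proof -
  have "w < g z \<longleftrightarrow> w < z" "g z < w \<longleftrightarrow> z < w" if "w \<in> F" for w
    using order_automorphisms_less_iff[OF g, of w z] order_automorphisms_less_iff[OF g, of z w]
      assms(2) that by simp_all
  then show ?thesis unfolding cut_class_def by simp
qed

lemma cut_class_no_max:
  fixes F :: "'a::linorder set"
  assumes F: "well_ordered_set F"
    and dense: "\<And>x y::'a. x < y \<Longrightarrow> \<exists>z. x < z \<and> z < y" and no_max: "\<And>x::'a. \<exists>y. x < y"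
    and "y \<notin> F" and z: "z \<in> cut_class F y"
  shows "\<exists>z'\<in>cut_class F y. z < z'"
proof -
  have "z \<notin> F" using cut_class_disjoint[OF \<open>y \<notin> F\<close>] z by blast
  obtain z' where "z < z'" "\<And>w. w \<in> F \<Longrightarrow> \<not> (z \<le> w \<and> w \<le> z')"
  proof (cases "\<exists>w\<in>F. z < w")
    case True
    then obtain m where m: "m \<in> F" "z < m" "\<forall>w\<in>F. z < w \<longrightarrow> m \<le> w"
      using well_ordered_setD[OF F, of "{w\<in>F. z < w}"] by auto
    obtain z' where "z < z'" "z' < m" using dense[OF \<open>z < m\<close>] by blast
    moreover have "\<not> (z \<le> w \<and> w \<le> z')" if "w \<in> F" for w
      using m(3) that \<open>z \<notin> F\<close> \<open>z' < m\<close> by (metis le_less not_le order_trans)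
    ultimately show ?thesis using that by blast
  next
    case False
    obtain z' where "z < z'" using no_max by blast
    moreover have "\<not> (z \<le> w \<and> w \<le> z')" if "w \<in> F" for w
      using False that \<open>z \<notin> F\<close> by (metis le_less)
    ultimately show ?thesis using that by blast
  qed
  then have "z' \<in> cut_class F z" by (intro cut_class_memI) simp_all
  with \<open>z < z'\<close> cut_class_eq[OF z] show ?thesis by blast
qed

lemma cut_class_no_min:
  fixes F :: "'a::linorder set"
  assumes "left_closed F" and dense: "\<And>x y::'a. x < y \<Longrightarrow> \<exists>z. x < z \<and> z < y"
    and "y \<notin> F" and z: "z \<in> cut_class F y"
  shows "\<exists>z'\<in>cut_class F y. z' < z"
proof -
  have "z \<notin> F" using cut_class_disjoint[OF \<open>y \<notin> F\<close>] z by blast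
  then obtain z0 where "z0 < z" and gap: "\<forall>w\<in>F. \<not> (z0 < w \<and> w < z)"
    using \<open>left_closed F\<close> unfolding left_closed_def by blast
  obtain z' where "z0 < z'" "z' < z" using dense[OF \<open>z0 < z\<close>] by blast
  have "\<not> (z' \<le> w \<and> w \<le> z)" if "w \<in> F" for w
    using gap that \<open>z \<notin> F\<close> \<open>z0 < z'\<close> by (metis le_less order_less_le_trans)
  then have "z \<in> cut_class F z'" using \<open>z' < z\<close> by (intro cut_class_memI) simp_all
  with \<open>z' < z\<close> cut_class_eq[OF z] show ?thesis by (metis cut_class_sym)
qed

lemma dense_without_endpoints_cut_class:
  fixes F :: "'a::linorder set"
  assumes "well_ordered_set F" "left_closed F"
    and dense: "\<And>x y::'a. x < y \<Longrightarrow> \<exists>z. x < z \<and> z < y" and no_max: "\<And>x::'a. \<exists>y. x < y"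
    and "y \<notin> F"
  shows "dense_without_endpoints (cut_class F y)"
proof (rule order_convex_dense_without_endpoints[OF dense order_convex_cut_class])
  show "cut_class F y \<noteq> {}" using cut_class_self by blast
  show "\<exists>z'\<in>cut_class F y. z < z'" if "z \<in> cut_class F y" for z
    using cut_class_no_max[OF assms(1) dense no_max \<open>y \<notin> F\<close> that] .
  show "\<exists>z'\<in>cut_class F y. z' < z" if "z \<in> cut_class F y" for z
    using cut_class_no_min[OF assms(2) dense \<open>y \<notin> F\<close> that] .
qed

lemma push_within_cut_class:
  fixes F :: "'a::linorder set"
  assumes "countable (UNIV :: 'a set)"
    and dense: "\<And>x y::'a. x < y \<Longrightarrow> \<exists>z. x < z \<and> z < y" and no_max: "\<And>x::'a. \<exists>y. x < y"
    and F: "well_ordered_set F" "left_closed F" and "x \<notin> F"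
    and c: "well_ordered_set c" and S: "finite S" "S \<subseteq> cut_class F x"
  shows "\<exists>\<sigma>\<in>order_automorphisms. (\<forall>y. y \<notin> cut_class F x \<longrightarrow> \<sigma> y = y)
           \<and> (\<forall>z\<in>c \<inter> cut_class F x. \<forall>s\<in>S. s < \<sigma> z)"
proof (cases "c \<inter> cut_class F x = {}")
  case True
  then show ?thesis using id_in_order_automorphisms by fastforce
next
  case False
  define J where "J = cut_class F x"
  have J: "dense_without_endpoints J"
    unfolding J_def using dense_without_endpoints_cut_class[OF F dense no_max \<open>x \<notin> F\<close>] .
  obtain m where m: "m \<in> c \<inter> J" "\<forall>z\<in>c \<inter> J. m \<le> z"
    using well_ordered_setD[OF c, of "c \<inter> J"] False unfolding J_def by blast
  obtain q where q: "q \<in> J" "\<forall>s\<in>S. s < q"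
    using dense_without_endpoints_separate[OF J S(1) finite.emptyI] S(2) unfolding J_def by blast
  obtain \<sigma> where \<sigma>: "\<sigma> \<in> order_automorphisms" "\<sigma> m = q" "\<forall>y. y \<notin> J \<longrightarrow> \<sigma> y = y"
    using order_convex_homogeneous[of J m q] countable_subset[OF subset_UNIV \<open>countable UNIV\<close>]
      order_convex_cut_class J m(1) q(1) unfolding J_def by blast
  have "s < \<sigma> z" if "z \<in> c \<inter> J" "s \<in> S" for z s
    using q(2) that m(2) \<sigma>(1,2) order_automorphisms_le_iff by (metis order_less_le_trans)
  with \<sigma> show ?thesis unfolding J_def by blast
qed

section \<open>Pushing well-ordered sets up within the gaps\<close>

definition beyond_first :: "'a::linorder set \<Rightarrow> (nat \<Rightarrow> 'a) \<Rightarrow> nat \<Rightarrow> 'a set \<Rightarrow> bool" where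
  "beyond_first F xs n c \<longleftrightarrow> (\<forall>d\<in>c. d \<notin> F \<longrightarrow> (\<forall>k<n. xs k \<in> cut_class F d \<longrightarrow> xs k < d))"

lemma beyond_first_Suc:
  fixes F :: "'a::linorder set"
  assumes "countable (UNIV :: 'a set)"
    and dense: "\<And>x y::'a. x < y \<Longrightarrow> \<exists>z. x < z \<and> z < y" and no_max: "\<And>x::'a. \<exists>y. x < y"
    and F: "well_ordered_set F" "left_closed F"
    and c: "well_ordered_set c" and beyond: "beyond_first F xs n c"
  shows "\<exists>\<sigma>\<in>order_automorphisms. (\<forall>w\<in>F. \<sigma> w = w) \<and> beyond_first F xs (Suc n) (\<sigma> ` c)"
proof (cases "xs n \<in> F")
  case True
  then have "beyond_first F xs (Suc n) c"
    using beyond cut_class_disjoint unfolding beyond_first_def by (fastforce simp: less_Suc_eq)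
  then show ?thesis using id_in_order_automorphisms by (intro bexI[of _ id]) simp_all
next
  case False
  define J where "J = cut_class F (xs n)"
  obtain \<sigma> where \<sigma>: "\<sigma> \<in> order_automorphisms" "\<forall>y. y \<notin> J \<longrightarrow> \<sigma> y = y"
      and above: "\<forall>d\<in>c \<inter> J. \<forall>s\<in>xs ` {..n} \<inter> J. s < \<sigma> d"
    using push_within_cut_class[OF assms(1) dense no_max F False c, of "xs ` {..n} \<inter> J"]
    unfolding J_def by blast
  have \<sigma>_F: "\<forall>w\<in>F. \<sigma> w = w" using \<sigma>(2) cut_class_disjoint[OF False] unfolding J_def by blast
  have "beyond_first F xs (Suc n) (\<sigma> ` c)"
    unfolding beyond_first_def
  proof (intro ballI impI allI)
    fix d' k assume "d' \<in> \<sigma> ` c" "d' \<notin> F" "k < Suc n" and k: "xs k \<in> cut_class F d'"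
    then obtain d where d: "d \<in> c" "d' = \<sigma> d" by blast
    have class_d: "cut_class F d' = cut_class F d"
      using cut_class_automorphism[OF \<sigma>(1) \<sigma>_F] d(2) by simp
    show "xs k < d'"
    proof (cases "d \<in> J")
      case True
      then have "cut_class F d = J" unfolding J_def by (rule cut_class_eq)
      then show ?thesis using above d True k class_d \<open>k < Suc n\<close> by auto
    next
      case False
      then have "k \<noteq> n" using k class_d cut_class_sym unfolding J_def by metis
      then have "k < n" using \<open>k < Suc n\<close> by simp
      then show ?thesis
        using beyond d \<sigma>(2) False k class_d \<open>d' \<notin> F\<close> unfolding beyond_first_def by auto
    qed
  qed
  with \<sigma>(1) \<sigma>_F show ?thesis by blast
qed

lemma push_beyond_first:
  fixes F :: "'a::linorder set"
  assumes "countable (UNIV :: 'a set)"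
    and dense: "\<And>x y::'a. x < y \<Longrightarrow> \<exists>z. x < z \<and> z < y" and no_max: "\<And>x::'a. \<exists>y. x < y"
    and F: "well_ordered_set F" "left_closed F" and c: "well_ordered_set c"
  shows "\<exists>g\<in>order_automorphisms. (\<forall>w\<in>F. g w = w) \<and> beyond_first F xs n (g ` c)"
proof (induction n)
  case 0
  show ?case
    using id_in_order_automorphisms unfolding beyond_first_def by (intro bexI[of _ id]) simp_all
next
  case (Suc n)
  then obtain g where g: "g \<in> order_automorphisms" "\<forall>w\<in>F. g w = w" "beyond_first F xs n (g ` c)"
    by blast
  moreover have "well_ordered_set (g ` c)"
    using well_ordered_set_image_mono[OF c mono_order_automorphism[OF g(1)]] .
  ultimately obtain \<sigma> where \<sigma>: "\<sigma> \<in> order_automorphisms" "\<forall>w\<in>F. \<sigma> w = w"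
      "beyond_first F xs (Suc n) (\<sigma> ` g ` c)"
    using beyond_first_Suc[OF assms(1) dense no_max F] by blast
  then have "\<sigma> \<circ> g \<in> order_automorphisms" "\<forall>w\<in>F. (\<sigma> \<circ> g) w = w"
    using order_automorphisms_comp g by simp_all
  with \<sigma>(3) show ?case by (metis image_comp)
qed

lemma well_ordered_set_UN_beyond_first:
  fixes F :: "'a::linorder set"
  assumes F: "well_ordered_set F" and c: "\<And>n. well_ordered_set (c n)"
    and "surj xs" and beyond: "\<And>n. beyond_first F xs n (c n)"
  shows "well_ordered_set (\<Union>n. c n)"
  unfolding well_ordered_set_def
proof (intro allI impI)
  fix D assume D: "D \<subseteq> (\<Union>n. c n)" "D \<noteq> {}"
  define W where "W = {w\<in>F. \<exists>d\<in>D. d \<le> w}"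
  show "\<exists>m\<in>D. \<forall>y\<in>D. m \<le> y"
  proof (cases "\<exists>t\<in>D. \<forall>w\<in>W. t < w")
    case True
    then obtain t where t: "t \<in> D" "\<forall>w\<in>W. t < w" by blast
    obtain K where "xs K = t" using \<open>surj xs\<close> by (metis surjD)
    define D' where "D' = {d\<in>D. d \<le> t}"
    have "D' \<subseteq> (\<Union>n\<in>{..K}. c n)"
    proof
      fix d assume "d \<in> D'"
      then have "d \<in> D" "d \<le> t" unfolding D'_def by auto
      have gap: "\<not> (d \<le> w \<and> w \<le> t)" if "w \<in> F" for w
      proof
        assume w: "d \<le> w \<and> w \<le> t"
        then have "w \<in> W" using that \<open>d \<in> D\<close> unfolding W_def by blast
        with t(2) have "t < w" by blast
        with w show False by (meson leD)
      qed
      then have "xs K \<in> cut_class F d" using \<open>d \<le> t\<close> \<open>xs K = t\<close> by (metis cut_class_memI)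
      moreover have "d \<notin> F" using gap \<open>d \<le> t\<close> by blast
      moreover obtain n where "d \<in> c n" using D(1) \<open>d \<in> D\<close> by blast
      ultimately have "K < n \<Longrightarrow> xs K < d" using beyond[of n] unfolding beyond_first_def by blast
      with \<open>d \<le> t\<close> \<open>xs K = t\<close> have "n \<le> K" by (meson leD not_le)
      with \<open>d \<in> c n\<close> show "d \<in> (\<Union>n\<in>{..K}. c n)" by auto
    qed
    then have "well_ordered_set D'"
      using well_ordered_set_subset well_ordered_set_UN[of "{..K}" c] c by blast
    then obtain m where m: "m \<in> D'" "\<forall>y\<in>D'. m \<le> y"
      using well_ordered_setD[of D' D'] t(1) unfolding D'_def by blast
    have "m \<le> y" if "y \<in> D" for y
      using m that unfolding D'_def by (cases "y \<le> t") auto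
    with m(1) show ?thesis unfolding D'_def by blast
  next
    case False
    then have below: "\<forall>d\<in>D. \<exists>w\<in>W. w \<le> d" by (meson not_less)
    then have "W \<subseteq> F" "W \<noteq> {}" using D(2) unfolding W_def by auto
    then obtain w0 where w0: "w0 \<in> W" "\<forall>w\<in>W. w0 \<le> w" using well_ordered_setD[OF F] by blast
    then obtain d1 where "d1 \<in> D" "d1 \<le> w0" unfolding W_def by blast
    have "d1 \<le> d" if "d \<in> D" for d
    proof -
      obtain w where "w \<in> W" "w \<le> d" using below \<open>d \<in> D\<close> by blast
      with w0(2) \<open>d1 \<le> w0\<close> show ?thesis by (blast intro: order_trans)
    qed
    with \<open>d1 \<in> D\<close> show ?thesis by blast
  qed
qed

theorem mainTheorem12:
  fixes X :: "'a::linorder itself"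
  assumes "countable (UNIV :: 'a set)"
    and "\<And>x y::'a. x < y \<Longrightarrow> \<exists>z. x < z \<and> z < y"
    and "\<And>x::'a. \<exists>y. y < x"
    and "\<And>x::'a. \<exists>y. x < y"
  shows "sigma_complete (order_automorphisms :: ('a \<Rightarrow> 'a) set) (\<lambda>f x. f x)
           {A :: 'a set. well_ordered_set A}"
  unfolding sigma_complete_def
proof (intro ballI allI impI)
  fix a :: "'a set" and b :: "nat \<Rightarrow> 'a set"
  assume "a \<in> {A. well_ordered_set A}" and "\<forall>n. b n \<in> {A. well_ordered_set A}"
  then have a: "well_ordered_set a" and b: "\<And>n. well_ordered_set (b n)" by auto
  define F where "F = limit_closure a"
  have F: "well_ordered_set F" "left_closed F" "a \<subseteq> F"
    unfolding F_def using a well_ordered_limit_closure left_closed_limit_closure subset_limit_closure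
    by blast+
  define xs where "xs = from_nat_into (UNIV :: 'a set)"
  have "surj xs" unfolding xs_def using assms(1) by simp
  have "\<forall>n. \<exists>g. g \<in> order_automorphisms \<and> (\<forall>w\<in>F. g w = w) \<and> beyond_first F xs n (g ` b n)"
    using push_beyond_first[OF assms(1,2,4) F(1,2) b] by blast
  then obtain \<gamma> where \<gamma>: "\<And>n. \<gamma> n \<in> order_automorphisms" "\<And>n. \<forall>w\<in>F. \<gamma> n w = w"
      "\<And>n. beyond_first F xs n (\<gamma> n ` b n)"
    by metis
  have "\<gamma> n \<in> pstab order_automorphisms (\<lambda>f x. f x) a" for n
    using \<gamma>(1,2) F(3) unfolding pstab_def by blast
  moreover have "well_ordered_set (\<Union>n. \<gamma> n ` b n)"
    using well_ordered_set_UN_beyond_first[OF F(1) _ \<open>surj xs\<close> \<gamma>(3)]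
      well_ordered_set_image_mono[OF b mono_order_automorphism[OF \<gamma>(1)]] by blast
  ultimately show "\<exists>\<gamma>. (\<forall>n. \<gamma> n \<in> pstab order_automorphisms (\<lambda>f x. f x) a)
      \<and> (\<Union>n. (\<lambda>f x. f x) (\<gamma> n) ` b n) \<in> {A. well_ordered_set A}"
    by auto
qed

end
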